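(* Let $N\ge1$ and let $\gamma=\frac{B}{\sum_{j=1}^N C_j}$, where $B,C_1,\dots,C_N$ are mutually independent, $B$ is $\kappa$-$\mu$ shadowed with parameters $(\kappa,\mu,m,\bar x)$ and $C_j$ is $\kappa$-$\mu$ shadowed with parameters $(\kappa_j,\mu_j,m_j,\bar x_j)$. Let $f_\gamma$ and $F_\gamma$ be the density and CDF of $\gamma$. Then $$\lim_{z\to 0^+}\frac{z\,f_\gamma(z)}{F_\gamma(z)}=\mu .$$ Equivalently, the CDF of $\hat\gamma=-\gamma$ belongs to the maximum domain of attraction of the reversed Weibull distribution $\Lambda_2(z)=\exp(-(-z)^{\mu})$ for $z\le0$ (and $1$ for $z>0$).
   Context: A random variable $X$ is $\kappa$-$\mu$ shadowed with parameters $(\kappa,\mu,m,\bar x)$ (with $\kappa\ge 0$, $\mu>0$, $m>0$, $\bar x=\mathbb E[X]>0$) if it has density $$f_X(x)=\frac{x^{\mu-1}}{\theta^{\mu-m}\lambda^{m}\Gamma(\mu)}e^{-x/\theta}\,{}_1F_1\!\left(m;\mu;\frac{x}{\theta}-\frac{x}{\lambda}\right),\quad x\ge0,$$ where ${}_1F_1$ is the confluent hypergeometric function, $\theta=\frac{\bar x}{\mu(1+\kappa)}$ and $\lambda=\frac{(\mu\kappa+m)\bar x}{\mu(1+\kappa)m}$. A CDF $F$ is in the maximum domain of attraction of a distribution $G$ if for i.i.d. samples with CDF $F$ there are constants $a_K>0$, $b_K\in\mathbb R$ with $a_K^{-1}(\max_{k\le K}z_k-b_K)$ converging in distribution to $G$.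 *)

theory Defs
  imports "HOL-Probability.Probability"
begin

definition hyp1F1 :: "real \<Rightarrow> real \<Rightarrow> real \<Rightarrow> real" where
  "hyp1F1 a b z = (\<Sum>n. pochhammer a n / pochhammer b n * z ^ n / fact n)"

definition kms_theta :: "real \<Rightarrow> real \<Rightarrow> real \<Rightarrow> real" where
  "kms_theta \<kappa> \<mu> xb = xb / (\<mu> * (1 + \<kappa>))"

definition kms_lambda :: "real \<Rightarrow> real \<Rightarrow> real \<Rightarrow> real \<Rightarrow> real" where
  "kms_lambda \<kappa> \<mu> m xb = (\<mu> * \<kappa> + m) * xb / (\<mu> * (1 + \<kappa>) * m)"

definition kms_pdf :: "real \<Rightarrow> real \<Rightarrow> real \<Rightarrow> real \<Rightarrow> real \<Rightarrow> real" where
  "kms_pdf \<kappa> \<mu> m xb x =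
     (if x < 0 then 0 else
      (let th = kms_theta \<kappa> \<mu> xb; la = kms_lambda \<kappa> \<mu> m xb in
        x powr (\<mu> - 1) / (th powr (\<mu> - m) * la powr m * Gamma \<mu>)
        * exp (- x / th) * hyp1F1 m \<mu> (x / th - x / la)))"

end

theory Submission
  imports Defs
begin

text \<open>Given \<open>S = \<Sum>j C\<^sub>j\<close>, the CDF and density of \<open>\<gamma> = B / S\<close> are the scale mixtures
  \<open>F(z) = E[F\<^sub>B(z S)]\<close> and \<open>f(z) = E[S f\<^sub>B(z S)]\<close>. The \<open>\<kappa>\<close>-\<open>\<mu>\<close> shadowed density factors as
  \<open>f\<^sub>B(x) = x\<^sup>\<mu>\<^sup>-\<^sup>1 h(x)\<close> with \<open>h\<close> continuous, bounded and \<open>h(0) > 0\<close>, because \<open>\<^sub>1F\<^sub>1\<close> grows more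
  slowly than the factor \<open>e\<^sup>-\<^sup>x\<^sup>/\<^sup>\<theta>\<close> decays. Hence \<open>z f(z) = z\<^sup>\<mu> E[S\<^sup>\<mu> h(z S)]\<close> and, by the mean value
  theorem, \<open>F(z) = z\<^sup>\<mu> E[S\<^sup>\<mu> K(z S)]\<close> where \<open>K(x) = F\<^sub>B(x) / x\<^sup>\<mu>\<close> is bounded and tends to
  \<open>h(0) / \<mu>\<close>. As \<open>S\<close> has a finite \<open>\<mu>\<close>-th moment, dominated convergence gives
  \<open>z f(z) / F(z) \<rightarrow> E[S\<^sup>\<mu>] h(0) / (E[S\<^sup>\<mu>] h(0) / \<mu>) = \<mu>\<close>.\<close>

lemma shifted_ratio_le_max:
  fixes a b :: real
  assumes "a > 0" "b > 0"
  shows "(a + real k) / (b + real k) \<le> max 1 (a / b)"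
proof (cases "a \<le> b")
  case True
  then have "(a + real k) / (b + real k) \<le> 1" using assms by (simp add: divide_le_eq)
  then show ?thesis by linarith
next
  case False
  then have "(a + real k) / (b + real k) \<le> a / b" using assms
    by (simp add: divide_simps) (simp add: algebra_simps mult_right_mono)
  then show ?thesis by linarith
qed

lemma shifted_ratio_le_eventually:
  fixes a b r :: real
  assumes "b > 0" "r > 1" "(a - b) / (r - 1) \<le> real K" "K \<le> k"
  shows "(a + real k) / (b + real k) \<le> r"
proof -
  have "a - b \<le> (r - 1) * real K" using assms by (simp add: divide_le_eq mult.commute)
  also have "\<dots> \<le> (r - 1) * real k" using assms by (intro mult_left_mono) auto
  moreover have "b \<le> r * b" using assms by simp
  ultimately have "a + real k \<le> r * (b + real k)" by (simp add: algebra_simps)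
  then show ?thesis using assms by (simp add: divide_le_eq)
qed

lemma pochhammer_ratio_le_geometric:
  fixes a b r :: real
  assumes a: "a > 0" and b: "b > 0" and r: "r > 1"
  obtains C where "C > 0" "\<And>n. pochhammer a n / pochhammer b n \<le> C * r ^ n"
proof -
  obtain K :: nat where K: "(a - b) / (r - 1) \<le> real K" using real_arch_simple by blast
  define R where "R = max 1 (a / b)"
  have R: "R \<ge> 1" unfolding R_def by simp
  have bound: "pochhammer a n / pochhammer b n \<le> R ^ min n K * r ^ n" for n
  proof (induction n)
    case (Suc n)
    have split: "pochhammer a (Suc n) / pochhammer b (Suc n)
        = (pochhammer a n / pochhammer b n) * ((a + real n) / (b + real n))"
      by (simp add: pochhammer_Suc)
    have nonneg: "0 \<le> (a + real n) / (b + real n)" "0 \<le> R ^ min n K * r ^ n"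
      using a b R r by simp_all
    show ?case
    proof (cases "n < K")
      case True
      have "pochhammer a (Suc n) / pochhammer b (Suc n) \<le> R ^ min n K * r ^ n * R"
        unfolding split by (rule mult_mono[OF Suc shifted_ratio_le_max[OF a b, folded R_def] nonneg(2,1)])
      also have "\<dots> \<le> R ^ min (Suc n) K * r ^ Suc n"
        using True R r by (simp add: algebra_simps)
      finally show ?thesis .
    next
      case False
      have "pochhammer a (Suc n) / pochhammer b (Suc n) \<le> R ^ min n K * r ^ n * r"
        unfolding split
        by (rule mult_mono[OF Suc shifted_ratio_le_eventually[OF b r K] nonneg(2,1)]) (use False in auto)
      also have "\<dots> = R ^ min (Suc n) K * r ^ Suc n"
        using False by (simp add: algebra_simps min_def)
      finally show ?thesis .
    qed
  qed simp
  show ?thesis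
  proof (rule that[of "R ^ K"])
    show "R ^ K > 0" using R by simp
    fix n
    have "R ^ min n K * r ^ n \<le> R ^ K * r ^ n"
      using R r by (intro mult_right_mono power_increasing) auto
    with bound[of n] show "pochhammer a n / pochhammer b n \<le> R ^ K * r ^ n" by linarith
  qed
qed

lemma hyp1F1_series_eq:
  "(\<lambda>n. pochhammer (a::real) n / pochhammer b n * (z::real) ^ n / fact n)
   = (\<lambda>n. (pochhammer a n / pochhammer b n / fact n) * z ^ n)"
  by (simp add: fun_eq_iff divide_inverse mult_ac)

lemma hyp1F1_term_le_exp_term:
  fixes a b r C y :: real
  assumes "a > 0" "b > 0" "\<And>n. pochhammer a n / pochhammer b n \<le> C * r ^ n"
  shows "norm (pochhammer a n / pochhammer b n * y ^ n / fact n) \<le> C * (inverse (fact n) * (r * \<bar>y\<bar>) ^ n)"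
proof -
  have "pochhammer a n > 0" "pochhammer b n > 0" using assms by (simp_all add: pochhammer_pos)
  then have "norm (pochhammer a n / pochhammer b n * y ^ n / fact n)
      = pochhammer a n / pochhammer b n * \<bar>y\<bar> ^ n / fact n"
    by (simp add: abs_mult abs_divide power_abs)
  also have "\<dots> \<le> C * r ^ n * \<bar>y\<bar> ^ n / fact n"
    using assms(3)[of n] by (intro divide_right_mono mult_right_mono) auto
  finally show ?thesis by (simp add: power_mult_distrib field_simps)
qed

lemma summable_hyp1F1_series:
  fixes a b y :: real
  assumes a: "a > 0" and b: "b > 0"
  shows "summable (\<lambda>n. pochhammer a n / pochhammer b n * y ^ n / fact n)"
proof -
  obtain C where "\<And>n. pochhammer a n / pochhammer b n \<le> C * 2 ^ n"
    using pochhammer_ratio_le_geometric[OF a b, of 2] by auto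
  then have "norm (pochhammer a n / pochhammer b n * y ^ n / fact n)
      \<le> C * (inverse (fact n) * (2 * \<bar>y\<bar>) ^ n)" for n
    by (rule hyp1F1_term_le_exp_term[OF a b])
  then show ?thesis
    by (rule summable_comparison_test'[OF summable_mult[OF summable_exp]])
qed

lemma hyp1F1_le_exp:
  fixes a b r :: real
  assumes a: "a > 0" and b: "b > 0" and r: "r > 1"
  obtains C where "C > 0" "\<And>y. y \<ge> 0 \<Longrightarrow> 0 \<le> hyp1F1 a b y \<and> hyp1F1 a b y \<le> C * exp (r * y)"
proof -
  obtain C where C: "C > 0" "\<And>n. pochhammer a n / pochhammer b n \<le> C * r ^ n"
    using pochhammer_ratio_le_geometric[OF a b r] by blast
  show ?thesis
  proof (rule that[OF C(1)])
    fix y :: real assume y: "y \<ge> 0"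
    have terms_nonneg: "0 \<le> pochhammer a n / pochhammer b n * y ^ n / fact n" for n
      using a b y by (simp add: pochhammer_pos less_imp_le)
    have "(\<lambda>n. inverse (fact n) * (r * y) ^ n) sums exp (r * y)"
      using exp_converges[of "r * y"] by (simp add: divide_inverse mult.commute)
    then have exp_sum: "(\<lambda>n. C * (inverse (fact n) * (r * y) ^ n)) sums (C * exp (r * y))"
      by (rule sums_mult)
    have "pochhammer a n / pochhammer b n * y ^ n / fact n \<le> C * (inverse (fact n) * (r * y) ^ n)" for n
      using hyp1F1_term_le_exp_term[OF a b C(2), of n y] terms_nonneg[of n] y
      by (simp only: real_norm_def abs_of_nonneg)
    then have "hyp1F1 a b y \<le> C * exp (r * y)"
      unfolding hyp1F1_def sums_unique[OF exp_sum]
      by (intro suminf_le summable_hyp1F1_series a b sums_summable[OF exp_sum])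
    moreover have "0 \<le> hyp1F1 a b y"
      unfolding hyp1F1_def by (intro suminf_nonneg summable_hyp1F1_series a b terms_nonneg)
    ultimately show "0 \<le> hyp1F1 a b y \<and> hyp1F1 a b y \<le> C * exp (r * y)" by simp
  qed
qed

lemma isCont_hyp1F1:
  fixes a b :: real
  assumes "a > 0" "b > 0"
  shows "isCont (hyp1F1 a b) y"
proof -
  have "summable (\<lambda>n. (pochhammer a n / pochhammer b n / fact n) * (\<bar>y\<bar> + 1) ^ n)"
    using summable_hyp1F1_series[OF assms] by (simp add: hyp1F1_series_eq)
  then show ?thesis
    unfolding hyp1F1_def hyp1F1_series_eq by (rule isCont_powser) auto
qed

lemma hyp1F1_0 [simp]: "hyp1F1 a b 0 = 1"
  unfolding hyp1F1_def hyp1F1_series_eq by (subst powser_zero) simp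

lemma kms_hyp1F1_argument:
  fixes \<kappa> \<mu> m xb :: real
  assumes "\<kappa> \<ge> 0" "\<mu> > 0" "m > 0" "xb > 0"
  shows "x / kms_theta \<kappa> \<mu> xb - x / kms_lambda \<kappa> \<mu> m xb
           = (1 - m / (\<mu> * \<kappa> + m)) / kms_theta \<kappa> \<mu> xb * x"
proof -
  have pos: "\<mu> * \<kappa> + m > 0" "kms_theta \<kappa> \<mu> xb > 0"
    using assms by (simp_all add: add_nonneg_pos kms_theta_def)
  have la: "kms_lambda \<kappa> \<mu> m xb = kms_theta \<kappa> \<mu> xb * ((\<mu> * \<kappa> + m) / m)"
    unfolding kms_lambda_def kms_theta_def by simp
  have "x / th - x / (th * (s / m)) = (1 - m / s) / th * x" if "th > 0" "s > 0" "m > 0" for th s m :: real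
    using that by (simp add: field_simps)
  then show ?thesis unfolding la using pos assms by blast
qed

lemma kms_pdf_factorization:
  fixes \<kappa> \<mu> m xb :: real
  assumes k: "\<kappa> \<ge> 0" and mu: "\<mu> > 0" and m: "m > 0" and xb: "xb > 0"
  obtains h C \<delta> where
    "\<And>x. kms_pdf \<kappa> \<mu> m xb x = (if x \<le> 0 then 0 else x powr (\<mu> - 1) * h x)"
    "\<And>x. isCont h x" "h 0 > 0"
    "\<And>x. x \<ge> 0 \<Longrightarrow> 0 \<le> h x \<and> h x \<le> C * exp (- \<delta> * x)"
    "\<delta> > 0"
proof -
  define th where "th = kms_theta \<kappa> \<mu> xb"
  define la where "la = kms_lambda \<kappa> \<mu> m xb"
  define q where "q = m / (\<mu> * \<kappa> + m)"
  have th: "th > 0" unfolding th_def kms_theta_def using k mu xb by simp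
  have la: "la > 0" unfolding la_def kms_lambda_def using k mu m xb by (simp add: add_nonneg_pos)
  have q: "0 < q" "q \<le> 1" unfolding q_def using k mu m by (auto simp: divide_le_eq add_nonneg_pos)
  define D where "D = th powr (\<mu> - m) * la powr m * Gamma \<mu>"
  have D: "D > 0" unfolding D_def using th la mu by (simp add: Gamma_real_pos)
  define h where "h x = exp (- x / th) * hyp1F1 m \<mu> ((1 - q) / th * x) / D" for x
  have arg: "x / th - x / la = (1 - q) / th * x" for x
    unfolding th_def la_def q_def by (rule kms_hyp1F1_argument[OF k mu m xb])
  \<comment> \<open>Any rate \<open>r \<in> (1, 1/(1 - q))\<close> for the growth of \<open>\<^sub>1F\<^sub>1\<close> leaves net exponential decay.\<close>
  define r where "r = 1 + q / 2"
  have r: "r > 1" unfolding r_def using q by simp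
  obtain C where C: "\<And>y. y \<ge> 0 \<Longrightarrow> 0 \<le> hyp1F1 m \<mu> y \<and> hyp1F1 m \<mu> y \<le> C * exp (r * y)"
    using hyp1F1_le_exp[OF m mu r] by blast
  define \<delta> where "\<delta> = (1 - r * (1 - q)) / th"
  have \<delta>: "\<delta> > 0"
  proof -
    have "1 - r * (1 - q) = q / 2 + q * q / 2" unfolding r_def by (simp add: field_simps)
    then show ?thesis unfolding \<delta>_def using th q by (simp add: add_pos_pos)
  qed
  show ?thesis
  proof (rule that[of h "C / D" \<delta>])
    show "kms_pdf \<kappa> \<mu> m xb x = (if x \<le> 0 then 0 else x powr (\<mu> - 1) * h x)" for x
      unfolding kms_pdf_def h_def Let_def th_def[symmetric] la_def[symmetric] D_def[symmetric] arg
      by (auto simp: field_simps)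
    show "isCont h x" for x
      unfolding h_def by (intro continuous_intros isCont_o2[OF _ isCont_hyp1F1[OF m mu]]) (use D th in auto)
    show "h 0 > 0" unfolding h_def using D by simp
  next
    fix x :: real assume x: "x \<ge> 0"
    have y: "(1 - q) / th * x \<ge> 0" using x q th by simp
    have "exp (- x / th) * hyp1F1 m \<mu> ((1 - q) / th * x)
        \<le> exp (- x / th) * (C * exp (r * ((1 - q) / th * x)))"
      using C[OF y] by (intro mult_left_mono) auto
    also have "\<dots> = C * exp (- \<delta> * x)"
      unfolding \<delta>_def using th by (simp add: exp_add[symmetric] field_simps)
    finally show "0 \<le> h x \<and> h x \<le> C / D * exp (- \<delta> * x)"
      unfolding h_def using C[OF y] D by (simp add: divide_right_mono field_simps)
  qed (rule \<delta>)
qed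

lemma powr_mult_exp_le:
  fixes A c x :: real
  assumes A: "A > 0" and c: "c > 0" and x: "x \<ge> 0"
  shows "x powr A * exp (- c * x) \<le> (A / c) powr A"
proof -
  have "c * x / A \<le> exp (c * x / A)" using exp_ge_add_one_self[of "c * x / A"] by linarith
  then have "x \<le> (A / c) * exp (c * x / A)" using A c by (simp add: field_simps)
  then have "x powr A \<le> ((A / c) * exp (c * x / A)) powr A" using x A by (intro powr_mono2) auto
  also have "\<dots> = (A / c) powr A * exp (c * x / A) powr A"
    using A c by (intro powr_mult)
  also have "exp (c * x / A) powr A = exp (c * x)" using A by (simp add: powr_def)
  finally have "x powr A * exp (- c * x) \<le> (A / c) powr A * exp (c * x) * exp (- c * x)"
    by (intro mult_right_mono) auto
  also have "\<dots> = (A / c) powr A" by (simp add: exp_minus field_simps)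
  finally show ?thesis .
qed

lemma integrable_indicator_exp_neg:
  fixes c :: real
  assumes c: "c > 0"
  shows "integrable lborel (\<lambda>x. indicator {0..} x * exp (- c * x))"
proof -
  interpret prob_space "density lborel (\<lambda>x. ennreal (exponential_density c x))"
    by (rule prob_space_exponential_density[OF c])
  have "integrable (density lborel (\<lambda>x. ennreal (exponential_density c x))) (\<lambda>_. 1::real)"
    by simp
  then have "integrable lborel (\<lambda>x. (1 / c) * exponential_density c x)"
    by (subst (asm) integrable_density) (use exponential_density_nonneg[OF c] in auto)
  also have "(\<lambda>x. (1 / c) * exponential_density c x) = (\<lambda>x. indicator {0..} x * exp (- c * x))"
    using c by (auto simp: fun_eq_iff exponential_density_def indicator_def mult.commute)
  finally show ?thesis .
qed

lemma integrable_powr_density_mult_powr: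
  fixes f h :: "real \<Rightarrow> real" and \<mu> C \<delta> p :: real
  assumes f_int: "integrable lborel f"
    and f: "\<And>x. f x = (if x \<le> 0 then 0 else x powr (\<mu> - 1) * h x)"
    and h: "\<And>x. x \<ge> 0 \<Longrightarrow> 0 \<le> h x \<and> h x \<le> C * exp (- \<delta> * x)"
    and mu: "\<mu> > 0" and \<delta>: "\<delta> > 0" and p: "p \<ge> 0"
  shows "integrable lborel (\<lambda>x. f x * x powr p)"
proof -
  have f_nonneg: "0 \<le> f x" for x using h[of x] by (auto simp: f)
  have C: "C \<ge> 0" using h[of 0] by simp
  have [measurable]: "f \<in> borel_measurable borel" using borel_measurable_integrable[OF f_int] by simp
  define c where "c = \<delta> / 2"
  have c: "c > 0" unfolding c_def using \<delta> by simp
  define K where "K = ((\<mu> + p) / c) powr (\<mu> + p)"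
  have K: "K \<ge> 0" unfolding K_def by simp
  define dom where "dom x = f x + C * K * (indicator {0..} x * exp (- c * x))" for x
  \<comment> \<open>Near \<open>0\<close> the factor \<open>x\<^sup>p\<close> is at most \<open>1\<close>; far out the exponential decay absorbs it.\<close>
  have dominated: "f x * x powr p \<le> dom x" for x
  proof (cases "x \<le> 1")
    case True
    have "f x * x powr p \<le> f x"
    proof (cases "x > 0")
      case pos: True
      then have "x powr p \<le> 1" using True p powr_mono2[of p x 1] by simp
      from mult_left_mono[OF this f_nonneg[of x]] show ?thesis by simp
    qed (simp add: f)
    moreover have "0 \<le> C * K * (indicator {0..} x * exp (- c * x))" using C K by simp
    ultimately show ?thesis unfolding dom_def by linarith
  next
    case False
    have "f x * x powr p = x powr (\<mu> - 1 + p) * h x" using False by (simp add: f powr_add)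
    also have "\<dots> \<le> x powr (\<mu> + p) * (C * exp (- \<delta> * x))"
      using False h[of x] by (intro mult_mono powr_mono) auto
    also have "\<dots> = C * (x powr (\<mu> + p) * exp (- c * x)) * exp (- c * x)"
      unfolding c_def by (simp add: exp_add[symmetric] field_simps)
    also have "\<dots> \<le> C * K * exp (- c * x)"
      unfolding K_def using C False mu p c
      by (intro mult_right_mono mult_left_mono powr_mult_exp_le) auto
    finally show ?thesis unfolding dom_def using False f_nonneg[of x] by simp
  qed
  show ?thesis
  proof (rule Bochner_Integration.integrable_bound[where f=dom])
    show "integrable lborel dom"
      unfolding dom_def using integrable_indicator_exp_neg[OF c]
      by (intro Bochner_Integration.integrable_add f_int integrable_mult_right)
    show "(\<lambda>x. f x * x powr p) \<in> borel_measurable lborel" by measurable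
    show "AE x in lborel. norm (f x * x powr p) \<le> norm (dom x)"
    proof (rule AE_I2)
      fix x
      have "0 \<le> f x * x powr p" using f_nonneg[of x] by simp
      with dominated[of x] show "norm (f x * x powr p) \<le> norm (dom x)" by simp
    qed
  qed
qed

lemma integrable_density_of_distributed:
  fixes X :: "'a \<Rightarrow> real" and f :: "real \<Rightarrow> real" and M :: "'a measure"
  assumes "prob_space M" and d: "distributed M lborel X (\<lambda>x. ennreal (f x))"
    and f_nonneg: "\<And>x. 0 \<le> f x"
  shows "integrable lborel f"
proof -
  interpret prob_space M by fact
  have "integrable lborel (\<lambda>x. f x * 1)"
    using distributed_integrable[OF d, of "\<lambda>_. 1"] f_nonneg by simp
  then show ?thesis by simp
qed

lemma AE_pos_of_distributed:
  fixes X :: "'a \<Rightarrow> real" and f :: "real \<Rightarrow> real" and M :: "'a measure"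
  assumes d: "distributed M lborel X (\<lambda>x. ennreal (f x))"
    and f_nonpos: "\<And>x. x \<le> 0 \<Longrightarrow> f x = 0" and f_nonneg: "\<And>x. 0 \<le> f x"
  shows "AE \<omega> in M. X \<omega> > 0"
proof -
  have [measurable]: "f \<in> borel_measurable borel"
    using distributed_real_measurable[OF _ d] f_nonneg by simp
  have "AE x in density lborel (\<lambda>x. ennreal (f x)). x > 0"
    by (subst AE_density) (auto simp: f_nonpos intro!: AE_I2 not_le_imp_less)
  then show ?thesis
    unfolding distributed_distr_eq_density[OF d, symmetric]
    by (rule AE_distrD[OF distributed_measurable[OF d]])
qed

lemma kms_distributed_pos_moments:
  fixes X :: "'a \<Rightarrow> real" and M :: "'a measure"
  assumes M: "prob_space M" and params: "\<kappa> \<ge> 0" "\<mu> > 0" "m > 0" "xb > 0"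
    and d: "distributed M lborel X (\<lambda>x. ennreal (kms_pdf \<kappa> \<mu> m xb x))"
  shows "AE \<omega> in M. X \<omega> > 0" and "\<And>p. p \<ge> 0 \<Longrightarrow> integrable M (\<lambda>\<omega>. X \<omega> powr p)"
proof -
  obtain h C \<delta> where f: "\<And>x. kms_pdf \<kappa> \<mu> m xb x = (if x \<le> 0 then 0 else x powr (\<mu> - 1) * h x)"
    and h: "\<And>x. x \<ge> 0 \<Longrightarrow> 0 \<le> h x \<and> h x \<le> C * exp (- \<delta> * x)" and \<delta>: "\<delta> > 0"
    using kms_pdf_factorization[OF params] by metis
  have f_nonneg: "0 \<le> kms_pdf \<kappa> \<mu> m xb x" for x using h[of x] by (cases "x > 0") (auto simp: f)
  show "AE \<omega> in M. X \<omega> > 0"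
    by (rule AE_pos_of_distributed[OF d _ f_nonneg]) (simp add: f)
  fix p :: real assume p: "p \<ge> 0"
  have "integrable lborel (\<lambda>x. kms_pdf \<kappa> \<mu> m xb x * x powr p)"
    using integrable_density_of_distributed[OF M d f_nonneg] f h params(2) \<delta> p
    by (rule integrable_powr_density_mult_powr)
  then show "integrable M (\<lambda>\<omega>. X \<omega> powr p)"
    using distributed_integrable[OF d, of "\<lambda>x. x powr p"] f_nonneg by simp
qed

lemma sum_powr_le_card_powr_sum:
  fixes c :: "'i \<Rightarrow> real" and J :: "'i set" and \<mu> :: real
  assumes J: "finite J" "J \<noteq> {}" and c: "\<And>j. j \<in> J \<Longrightarrow> c j > 0" and mu: "\<mu> > 0"
  shows "(\<Sum>j\<in>J. c j) powr \<mu> \<le> real (card J) powr \<mu> * (\<Sum>j\<in>J. c j powr \<mu>)"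
proof -
  have "Max (c ` J) \<in> c ` J" using J by (intro Max_in) auto
  then obtain j0 where j0: "j0 \<in> J" "c j0 = Max (c ` J)" by auto
  have "(\<Sum>j\<in>J. c j) \<le> real (card J) * c j0"
    using sum_mono[of J c "\<lambda>_. c j0"] J j0 by simp
  then have "(\<Sum>j\<in>J. c j) powr \<mu> \<le> (real (card J) * c j0) powr \<mu>"
    using J c mu by (intro powr_mono2 sum_nonneg) (auto intro: less_imp_le)
  also have "\<dots> = real (card J) powr \<mu> * c j0 powr \<mu>" using j0 c by (simp add: powr_mult less_imp_le)
  also have "\<dots> \<le> real (card J) powr \<mu> * (\<Sum>j\<in>J. c j powr \<mu>)"
    using J j0 by (intro mult_left_mono member_le_sum) auto
  finally show ?thesis .
qed

lemma integrable_sum_powr: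
  fixes X :: "'i \<Rightarrow> 'a \<Rightarrow> real" and J :: "'i set" and M :: "'a measure"
  assumes "prob_space M" "finite J" "J \<noteq> {}" "\<mu> > 0"
    and meas: "\<And>j. j \<in> J \<Longrightarrow> X j \<in> borel_measurable M"
    and pos: "\<And>j. j \<in> J \<Longrightarrow> AE \<omega> in M. X j \<omega> > 0"
    and int: "\<And>j. j \<in> J \<Longrightarrow> integrable M (\<lambda>\<omega>. X j \<omega> powr \<mu>)"
  shows "integrable M (\<lambda>\<omega>. (\<Sum>j\<in>J. X j \<omega>) powr \<mu>)"
proof (rule Bochner_Integration.integrable_bound)
  show "integrable M (\<lambda>\<omega>. real (card J) powr \<mu> * (\<Sum>j\<in>J. X j \<omega> powr \<mu>))"
    using int by (intro integrable_mult_right Bochner_Integration.integrable_sum) auto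
  show "(\<lambda>\<omega>. (\<Sum>j\<in>J. X j \<omega>) powr \<mu>) \<in> borel_measurable M"
    using meas by measurable
  have "AE \<omega> in M. \<forall>j\<in>J. X j \<omega> > 0" using pos assms(2) by (subst AE_finite_all) auto
  then show "AE \<omega> in M. norm ((\<Sum>j\<in>J. X j \<omega>) powr \<mu>)
      \<le> norm (real (card J) powr \<mu> * (\<Sum>j\<in>J. X j \<omega> powr \<mu>))"
  proof eventually_elim
    case (elim \<omega>)
    then show ?case
      using sum_powr_le_card_powr_sum[of J "\<lambda>j. X j \<omega>" \<mu>] assms(2-4)
      by (simp add: sum_nonneg)
  qed
qed

lemma distributed_cdf_eq_add_interval_integral:
  fixes X :: "'a \<Rightarrow> real" and f :: "real \<Rightarrow> real" and M :: "'a measure"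
  assumes M: "prob_space M" and d: "distributed M lborel X (\<lambda>x. ennreal (f x))"
    and f_nonneg: "\<And>x. 0 \<le> f x" and ax: "a \<le> x"
  shows "measure M {\<omega>\<in>space M. X \<omega> \<le> x} = measure M {\<omega>\<in>space M. X \<omega> \<le> a} + (LBINT t=a..x. f t)"
proof -
  interpret prob_space M by (rule M)
  have [measurable]: "f \<in> borel_measurable borel"
    using distributed_real_measurable[OF _ d] f_nonneg by simp
  have [measurable]: "X \<in> borel_measurable M" using distributed_measurable[OF d] by simp
  have f_int: "integrable lborel f" by (rule integrable_density_of_distributed[OF M d f_nonneg])
  have interval: "(LBINT t=a..x. f t) = (\<integral>t. f t * indicator {a<..x} t \<partial>lborel)"
    unfolding interval_integral_Ioc[OF ax] set_lebesgue_integral_def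
    by (intro Bochner_Integration.integral_cong) (auto simp: mult.commute)
  have "emeasure M (X -` {a<..x} \<inter> space M) = (\<integral>\<^sup>+t. ennreal (f t) * indicator {a<..x} t \<partial>lborel)"
    by (rule distributed_emeasure[OF d]) simp
  also have "\<dots> = (\<integral>\<^sup>+t. ennreal (f t * indicator {a<..x} t) \<partial>lborel)"
    by (intro nn_integral_cong) (auto simp: indicator_def)
  also have "\<dots> = ennreal (LBINT t=a..x. f t)"
    unfolding interval
    by (intro nn_integral_eq_integral integrable_real_mult_indicator f_int AE_I2) (auto simp: f_nonneg)
  finally have "measure M (X -` {a<..x} \<inter> space M) = (LBINT t=a..x. f t)"
    unfolding interval using f_nonneg
    by (simp add: measure_def integral_nonneg_AE AE_I2 enn2real_ennreal)
  moreover have "{\<omega>\<in>space M. X \<omega> \<le> x} = {\<omega>\<in>space M. X \<omega> \<le> a} \<union> (X -` {a<..x} \<inter> space M)"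
    using ax by auto
  moreover have "measure M ({\<omega>\<in>space M. X \<omega> \<le> a} \<union> (X -` {a<..x} \<inter> space M))
      = measure M {\<omega>\<in>space M. X \<omega> \<le> a} + measure M (X -` {a<..x} \<inter> space M)"
    by (intro finite_measure_Union) (auto intro: measurable_sets)
  ultimately show ?thesis by simp
qed

lemma distributed_cdf_has_real_derivative:
  fixes X :: "'a \<Rightarrow> real" and f :: "real \<Rightarrow> real" and M :: "'a measure"
  assumes M: "prob_space M" and d: "distributed M lborel X (\<lambda>x. ennreal (f x))"
    and f_nonneg: "\<And>x. 0 \<le> f x" and ab: "a < x0" "x0 < b" and cont: "continuous_on {a..b} f"
  shows "((\<lambda>x. measure M {\<omega>\<in>space M. X \<omega> \<le> x}) has_real_derivative f x0) (at x0)"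
proof -
  have "((\<lambda>u. LBINT y=a..u. f y) has_vector_derivative f x0) (at x0 within {a..b})"
    by (rule interval_integral_FTC2[OF _ _ cont]) (use ab in auto)
  moreover have "at x0 within {a..b} = at x0" by (rule at_within_interior) (use ab in simp)
  ultimately have "((\<lambda>u. measure M {\<omega>\<in>space M. X \<omega> \<le> a} + (LBINT y=a..u. f y))
      has_real_derivative f x0) (at x0)"
    unfolding has_real_derivative_iff_has_vector_derivative[symmetric]
    by (auto intro!: derivative_eq_intros)
  then show ?thesis
  proof (rule has_field_derivative_transform_within_open[where S="{a<..<b}"])
    show "measure M {\<omega>\<in>space M. X \<omega> \<le> a} + (LBINT y=a..x. f y) = measure M {\<omega>\<in>space M. X \<omega> \<le> x}"
      if "x \<in> {a<..<b}" for x
      using distributed_cdf_eq_add_interval_integral[OF M d f_nonneg, of a x] that by simp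
  qed (use ab in auto)
qed

lemma integral_dominated_convergence_at:
  fixes s :: "real \<Rightarrow> 'b \<Rightarrow> real" and w f :: "'b \<Rightarrow> real" and Q :: "'b measure"
  assumes "\<And>t. s t \<in> borel_measurable Q" and "f \<in> borel_measurable Q"
    and "integrable Q w"
    and lim: "AE x in Q. ((\<lambda>t. s t x) \<longlongrightarrow> f x) (at a within S)"
    and bound: "eventually (\<lambda>t. AE x in Q. norm (s t x) \<le> w x) (at a within S)"
  shows "((\<lambda>t. integral\<^sup>L Q (s t)) \<longlongrightarrow> integral\<^sup>L Q f) (at a within S)"
  unfolding tendsto_at_iff_sequentially comp_def
proof (intro allI impI)
  fix X :: "nat \<Rightarrow> real" assume "\<forall>i. X i \<in> S - {a}" and "X \<longlonglongrightarrow> a"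
  then have X: "filterlim X (at a within S) sequentially" by (auto simp: filterlim_at)
  from filterlim_iff[THEN iffD1, OF X, rule_format, OF bound]
  obtain N where N: "\<And>n. N \<le> n \<Longrightarrow> AE x in Q. norm (s (X n) x) \<le> w x"
    by (auto simp: eventually_sequentially)
  show "(\<lambda>n. integral\<^sup>L Q (s (X n))) \<longlonglongrightarrow> integral\<^sup>L Q f"
  proof (rule LIMSEQ_offset[of _ N], rule integral_dominated_convergence[OF assms(2,1,3)])
    show "AE x in Q. (\<lambda>n. s (X (n + N)) x) \<longlonglongrightarrow> f x"
      using lim by eventually_elim (rule LIMSEQ_ignore_initial_segment[OF filterlim_compose[OF _ X]])
    show "AE x in Q. norm (s (X (n + N)) x) \<le> w x" for n by (rule N) simp
  qed
qed

lemma cdf_powr_mean_value: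
  fixes F f h :: "real \<Rightarrow> real" and \<mu> x :: real
  assumes F_deriv: "\<And>x. x > 0 \<Longrightarrow> (F has_real_derivative f x) (at x)"
    and f: "\<And>x. x > 0 \<Longrightarrow> f x = x powr (\<mu> - 1) * h x"
    and F_nonpos: "\<And>y. y \<le> 0 \<Longrightarrow> F y = 0"
    and F_cont: "continuous (at_right 0) F"
    and mu: "\<mu> > 0" and x: "x > 0"
  shows "\<exists>\<xi>. 0 < \<xi> \<and> \<xi> < x \<and> F x = x powr \<mu> * h \<xi> / \<mu>"
proof -
  have "continuous (at_left 0) F"
    unfolding continuous_within
    by (rule tendsto_eventually, rule eventually_mono[OF eventually_at_left_real[of "-1" 0]])
       (auto simp: F_nonpos)
  with F_cont have "isCont F 0" by (simp add: continuous_at_split)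
  then have F_isCont: "isCont F y" if "y \<ge> 0" for y
    using that F_deriv[of y] by (cases "y = 0") (auto intro: DERIV_isCont)
  \<comment> \<open>Rolle's theorem for \<open>\<phi>(y) = F(y) x\<^sup>\<mu> - y\<^sup>\<mu> F(x)\<close>, i.e.\ Cauchy's mean value theorem for \<open>F\<close> and \<open>y\<^sup>\<mu>\<close>.\<close>
  define \<phi> where "\<phi> y = F y * x powr \<mu> - y powr \<mu> * F x" for y
  have \<phi>_cont: "continuous_on {0..x} \<phi>" unfolding \<phi>_def
    using F_isCont mu by (intro continuous_intros continuous_on_powr' continuous_at_imp_continuous_on) auto
  have \<phi>_deriv: "(\<phi> has_real_derivative (f y * x powr \<mu> - \<mu> * y powr (\<mu> - 1) * F x)) (at y)"
    if "y > 0" for y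
    unfolding \<phi>_def using that F_deriv[OF that] by (auto intro!: derivative_eq_intros simp: algebra_simps)
  obtain l \<xi> where \<xi>: "0 < \<xi>" "\<xi> < x" and l: "DERIV \<phi> \<xi> :> l" and "\<phi> x - \<phi> 0 = (x - 0) * l"
    using MVT[OF x \<phi>_cont] \<phi>_deriv by (metis real_differentiable_def)
  moreover have "\<phi> x = 0" "\<phi> 0 = 0" unfolding \<phi>_def using F_nonpos[of 0] by auto
  ultimately have "l = 0" using x by simp
  then have "\<xi> powr (\<mu> - 1) * h \<xi> * x powr \<mu> = \<mu> * \<xi> powr (\<mu> - 1) * F x"
    using DERIV_unique[OF l \<phi>_deriv[OF \<xi>(1)]] f[OF \<xi>(1)] by simp
  then have "h \<xi> * x powr \<mu> = \<mu> * F x" using \<xi> by (simp add: mult_ac)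
  then have "F x = x powr \<mu> * h \<xi> / \<mu>" using mu by (simp add: field_simps)
  with \<xi> show ?thesis by (intro exI[of _ \<xi>] conjI)
qed

lemma cdf_div_powr_tendsto:
  fixes F f h :: "real \<Rightarrow> real" and \<mu> H :: real
  assumes F_deriv: "\<And>x. x > 0 \<Longrightarrow> (F has_real_derivative f x) (at x)"
    and f: "\<And>x. x > 0 \<Longrightarrow> f x = x powr (\<mu> - 1) * h x"
    and F_nonpos: "\<And>y. y \<le> 0 \<Longrightarrow> F y = 0"
    and F_cont: "continuous (at_right 0) F"
    and mu: "\<mu> > 0" and h_cont: "isCont h 0"
    and h_bound: "\<And>x. x \<ge> 0 \<Longrightarrow> 0 \<le> h x \<and> h x \<le> H"
  shows "((\<lambda>x. F x / x powr \<mu>) \<longlongrightarrow> h 0 / \<mu>) (at_right 0)"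
    and "\<And>x. x > 0 \<Longrightarrow> 0 \<le> F x / x powr \<mu> \<and> F x / x powr \<mu> \<le> H / \<mu>"
proof -
  define \<xi> where "\<xi> x = (SOME \<xi>. 0 < \<xi> \<and> \<xi> < x \<and> F x = x powr \<mu> * h \<xi> / \<mu>)" for x
  have \<xi>: "0 < \<xi> x \<and> \<xi> x < x \<and> F x = x powr \<mu> * h (\<xi> x) / \<mu>" if "x > 0" for x
    unfolding \<xi>_def
    by (rule someI_ex, rule cdf_powr_mean_value[OF F_deriv f F_nonpos F_cont mu that])
  have eq: "F x / x powr \<mu> = h (\<xi> x) / \<mu>" if "x > 0" for x
    using \<xi>[OF that] that by simp
  show "0 \<le> F x / x powr \<mu> \<and> F x / x powr \<mu> \<le> H / \<mu>" if "x > 0" for x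
    using eq[OF that] h_bound[of "\<xi> x"] \<xi>[OF that] mu by (simp add: divide_right_mono)
  have "(\<xi> \<longlongrightarrow> 0) (at_right 0)"
  proof (rule tendsto_sandwich[of "\<lambda>_. 0" _ _ "\<lambda>x. x"])
    show "\<forall>\<^sub>F x in at_right 0. 0 \<le> \<xi> x" "\<forall>\<^sub>F x in at_right 0. \<xi> x \<le> x"
      using \<xi> by (auto intro!: eventually_mono[OF eventually_at_right_less] less_imp_le)
  qed (auto intro: tendsto_ident_at)
  then have "((\<lambda>x. h (\<xi> x) / \<mu>) \<longlongrightarrow> h 0 / \<mu>) (at_right 0)"
    by (intro tendsto_divide isCont_tendsto_compose[OF h_cont] tendsto_const) (use mu in auto)
  then show "((\<lambda>x. F x / x powr \<mu>) \<longlongrightarrow> h 0 / \<mu>) (at_right 0)"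
    by (rule Lim_transform_eventually) (auto simp: eq intro!: eventually_mono[OF eventually_at_right_less])
qed

lemma powr_le_max_endpoints:
  fixes a b t p :: real
  assumes "0 < a" "a \<le> t" "t \<le> b"
  shows "t powr p \<le> max (a powr p) (b powr p)"
proof (cases "p \<ge> 0")
  case True
  then have "t powr p \<le> b powr p" using assms by (intro powr_mono2) auto
  then show ?thesis by linarith
next
  case False
  then have "t powr p \<le> a powr p" using assms by (intro powr_mono2') auto
  then show ?thesis by linarith
qed

lemma cdf_scaled_diff_le:
  fixes F f h :: "real \<Rightarrow> real" and \<mu> H z0 z s :: real
  assumes F_deriv: "\<And>x. x > 0 \<Longrightarrow> (F has_real_derivative f x) (at x)"
    and f: "\<And>x. x > 0 \<Longrightarrow> f x = x powr (\<mu> - 1) * h x"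
    and h_bound: "\<And>x. x \<ge> 0 \<Longrightarrow> 0 \<le> h x \<and> h x \<le> H"
    and z0: "z0 > 0" and s: "s > 0" and z: "z0 / 2 \<le> z" "z \<le> 2 * z0"
  shows "\<bar>F (z * s) - F (z0 * s)\<bar>
           \<le> \<bar>z - z0\<bar> * (s powr \<mu> * (H * max ((z0 / 2) powr (\<mu> - 1)) ((2 * z0) powr (\<mu> - 1))))"
proof -
  define P where "P = max ((z0 / 2) powr (\<mu> - 1)) ((2 * z0) powr (\<mu> - 1))"
  define lo hi where "lo = min z z0" and "hi = max z z0"
  have lohi: "z0 / 2 \<le> lo" "hi \<le> 2 * z0" "lo > 0" "hi - lo = \<bar>z - z0\<bar>"
    using z z0 unfolding lo_def hi_def by auto
  have f_le: "0 \<le> f y \<and> f y \<le> P * s powr (\<mu> - 1) * H" if "lo * s \<le> y" "y \<le> hi * s" for y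
  proof -
    have "lo \<le> y / s" "y / s \<le> hi" using that s by (simp_all add: le_divide_eq divide_le_eq)
    then have t: "z0 / 2 \<le> y / s" "y / s \<le> 2 * z0"
      using lohi by linarith+
    have "y / s > 0" using t z0 by linarith
    then have "y > 0" using s by (simp add: zero_less_divide_iff)
    have "f y = (y / s) powr (\<mu> - 1) * s powr (\<mu> - 1) * h y"
      using f[OF \<open>y > 0\<close>] s \<open>y > 0\<close> by (simp add: powr_mult[symmetric])
    moreover have "(y / s) powr (\<mu> - 1) \<le> P"
      unfolding P_def using powr_le_max_endpoints[of "z0 / 2" "y / s" "2 * z0"] t z0 by simp
    moreover have "0 \<le> h y" "h y \<le> H" using h_bound[of y] \<open>y > 0\<close> by auto
    moreover have "(y / s) powr (\<mu> - 1) * s powr (\<mu> - 1) \<le> P * s powr (\<mu> - 1)"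
      using calculation(2) by (rule mult_right_mono) simp
    moreover have "0 \<le> P" unfolding P_def by (simp add: le_max_iff_disj)
    ultimately show ?thesis
      using mult_mono[of "(y / s) powr (\<mu> - 1) * s powr (\<mu> - 1)" "P * s powr (\<mu> - 1)" "h y" H]
      by simp
  qed
  have "\<bar>F (hi * s) - F (lo * s)\<bar> \<le> (hi * s - lo * s) * (P * s powr (\<mu> - 1) * H)"
  proof (cases "lo = hi")
    case False
    then have True: "lo * s < hi * s" using s unfolding lo_def hi_def by auto
    have ls: "lo * s > 0" using lohi(3) s by simp
    have "(F has_real_derivative f x) (at x)" if "lo * s \<le> x" for x
      using ls that by (intro F_deriv) linarith
    with MVT2[OF True, of F f] obtain \<xi> where \<xi>: "lo * s < \<xi>" "\<xi> < hi * s"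
      and mvt: "F (hi * s) - F (lo * s) = (hi * s - lo * s) * f \<xi>"
      by blast
    then show ?thesis using f_le[of \<xi>] True by (simp add: abs_mult mult_left_mono)
  qed simp
  moreover have "\<bar>F (z * s) - F (z0 * s)\<bar> = \<bar>F (hi * s) - F (lo * s)\<bar>"
    unfolding lo_def hi_def by (cases "z \<le> z0") (auto simp: max_def min_def)
  moreover have "(hi * s - lo * s) * (P * s powr (\<mu> - 1) * H) = \<bar>z - z0\<bar> * (s powr \<mu> * (H * P))"
  proof -
    have "(hi * s - lo * s) * (P * s powr (\<mu> - 1) * H) = (hi - lo) * ((s * s powr (\<mu> - 1)) * (H * P))"
      by (simp add: algebra_simps)
    then show ?thesis using lohi(4) s by (simp add: powr_mult_base)
  qed
  ultimately show ?thesis unfolding P_def by simp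
qed

lemma mixture_cdf_has_real_derivative:
  fixes Q :: "real measure" and F f h :: "real \<Rightarrow> real" and \<mu> H z0 :: real
  assumes Q: "prob_space Q" "sets Q = sets borel"
    and pos: "AE s in Q. s > 0" and moment: "integrable Q (\<lambda>s. s powr \<mu>)"
    and F_deriv: "\<And>x. x > 0 \<Longrightarrow> (F has_real_derivative f x) (at x)"
    and f: "\<And>x. x > 0 \<Longrightarrow> f x = x powr (\<mu> - 1) * h x"
    and h_bound: "\<And>x. x \<ge> 0 \<Longrightarrow> 0 \<le> h x \<and> h x \<le> H"
    and [measurable]: "F \<in> borel_measurable borel" "f \<in> borel_measurable borel"
    and F_bound: "\<And>x. 0 \<le> F x \<and> F x \<le> 1"
    and z0: "z0 > 0"
  shows "((\<lambda>z. \<integral>s. F (z * s) \<partial>Q) has_real_derivative (\<integral>s. s * f (z0 * s) \<partial>Q)) (at z0)"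
proof -
  interpret prob_space Q by (rule Q(1))
  have bmQ: "borel_measurable Q = borel_measurable borel" by (rule measurable_cong_sets[OF Q(2) refl])
  define L where "L = H * max ((z0 / 2) powr (\<mu> - 1)) ((2 * z0) powr (\<mu> - 1))"
  have F_int: "integrable Q (\<lambda>s. F (z * s))" for z
  proof (rule Bochner_Integration.integrable_bound[of _ "\<lambda>_. 1::real"])
    show "(\<lambda>s. F (z * s)) \<in> borel_measurable Q" unfolding bmQ by measurable
    show "AE s in Q. norm (F (z * s)) \<le> norm (1::real)"
      using F_bound by (intro AE_I2) (simp add: abs_of_nonneg)
  qed simp
  have near: "eventually (\<lambda>z. z0 / 2 \<le> z \<and> z \<le> 2 * z0 \<and> z \<noteq> z0) (at z0)"
    unfolding eventually_at
    by (rule exI[of _ "z0 / 2"]) (use z0 in \<open>auto simp: dist_real_def abs_if split: if_splits\<close>)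
  \<comment> \<open>Differentiation under the integral sign, dominated by \<open>L s\<^sup>\<mu>\<close>.\<close>
  have "((\<lambda>z. \<integral>s. (F (z * s) - F (z0 * s)) / (z - z0) \<partial>Q) \<longlongrightarrow> (\<integral>s. s * f (z0 * s) \<partial>Q)) (at z0)"
  proof (rule integral_dominated_convergence_at[where w="\<lambda>s. s powr \<mu> * L"])
    show "AE s in Q. ((\<lambda>z. (F (z * s) - F (z0 * s)) / (z - z0)) \<longlongrightarrow> s * f (z0 * s)) (at z0)"
      using pos
    proof eventually_elim
      case (elim s)
      have "((\<lambda>z. F (z * s)) has_real_derivative f (z0 * s) * s) (at z0)"
        by (rule DERIV_chain2[OF F_deriv]) (use elim z0 in \<open>auto intro!: derivative_eq_intros\<close>)
      then show ?case unfolding has_field_derivative_iff by (simp add: mult.commute)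
    qed
    show "\<forall>\<^sub>F z in at z0. AE s in Q. norm ((F (z * s) - F (z0 * s)) / (z - z0)) \<le> s powr \<mu> * L"
      using near
    proof eventually_elim
      case (elim z)
      show ?case
        using pos
      proof eventually_elim
        case (elim s)
        have "\<bar>F (z * s) - F (z0 * s)\<bar> \<le> \<bar>z - z0\<bar> * (s powr \<mu> * L)"
          unfolding L_def by (rule cdf_scaled_diff_le[OF F_deriv f h_bound z0 elim]) (use \<open>z0 / 2 \<le> z \<and> z \<le> 2 * z0 \<and> z \<noteq> z0\<close> in auto)
        then show ?case
          using \<open>z0 / 2 \<le> z \<and> z \<le> 2 * z0 \<and> z \<noteq> z0\<close> by (simp add: abs_divide divide_le_eq mult.commute)
      qed
    qed
    show "(\<lambda>s. (F (z * s) - F (z0 * s)) / (z - z0)) \<in> borel_measurable Q" for z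
      unfolding bmQ by measurable
    show "(\<lambda>s. s * f (z0 * s)) \<in> borel_measurable Q" unfolding bmQ by measurable
    show "integrable Q (\<lambda>s. s powr \<mu> * L)" using moment by simp
  qed
  moreover have "(\<lambda>z. \<integral>s. (F (z * s) - F (z0 * s)) / (z - z0) \<partial>Q)
      = (\<lambda>z. ((\<integral>s. F (z * s) \<partial>Q) - (\<integral>s. F (z0 * s) \<partial>Q)) / (z - z0))"
    by (simp add: fun_eq_iff Bochner_Integration.integral_diff[OF F_int F_int])
  ultimately show ?thesis
    unfolding has_field_derivative_iff by simp
qed

lemma tendsto_mult_right_at_right_0:
  fixes s :: real
  assumes "s > 0"
  shows "filterlim (\<lambda>z. z * s) (at_right 0) (at_right 0)"
  unfolding filterlim_at
proof
  show "\<forall>\<^sub>F z in at_right 0. z * s \<in> {0<..} \<and> z * s \<noteq> 0"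
    using assms by (auto intro: eventually_mono[OF eventually_at_right_less])
  have "((\<lambda>z. z * s) \<longlongrightarrow> 0 * s) (at_right 0)" by (intro tendsto_intros)
  then show "((\<lambda>z. z * s) \<longlongrightarrow> 0) (at_right 0)" by simp
qed

lemma scaled_moment_integral_tendsto:
  fixes Q :: "real measure" and \<phi> :: "real \<Rightarrow> real" and \<mu> c L :: real
  assumes Q: "prob_space Q" "sets Q = sets borel"
    and pos: "AE s in Q. s > 0" and moment: "integrable Q (\<lambda>s. s powr \<mu>)"
    and [measurable]: "\<phi> \<in> borel_measurable borel"
    and lim: "(\<phi> \<longlongrightarrow> L) (at_right 0)"
    and bound: "\<And>x. x > 0 \<Longrightarrow> \<bar>\<phi> x\<bar> \<le> c"
  shows "((\<lambda>z. \<integral>s. s powr \<mu> * \<phi> (z * s) \<partial>Q) \<longlongrightarrow> (\<integral>s. s powr \<mu> \<partial>Q) * L) (at_right 0)"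
proof -
  interpret prob_space Q by (rule Q(1))
  have bmQ: "borel_measurable Q = borel_measurable borel" by (rule measurable_cong_sets[OF Q(2) refl])
  have "((\<lambda>z. \<integral>s. s powr \<mu> * \<phi> (z * s) \<partial>Q) \<longlongrightarrow> (\<integral>s. s powr \<mu> * L \<partial>Q)) (at_right 0)"
  proof (rule integral_dominated_convergence_at[where w="\<lambda>s. s powr \<mu> * c"])
    show "AE s in Q. ((\<lambda>z. s powr \<mu> * \<phi> (z * s)) \<longlongrightarrow> s powr \<mu> * L) (at_right 0)"
      using pos
      by eventually_elim (intro tendsto_mult tendsto_const filterlim_compose[OF lim tendsto_mult_right_at_right_0])
    show "\<forall>\<^sub>F z in at_right 0. AE s in Q. norm (s powr \<mu> * \<phi> (z * s)) \<le> s powr \<mu> * c"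
    proof (rule eventually_mono[OF eventually_at_right_less], rule AE_mp[OF pos], intro AE_I2 impI)
      fix z s :: real assume "z > 0" "s > 0"
      then show "norm (s powr \<mu> * \<phi> (z * s)) \<le> s powr \<mu> * c"
        using bound[of "z * s"] by (simp add: abs_mult mult_left_mono)
    qed
  qed (use moment in \<open>auto simp: bmQ\<close>)
  then show ?thesis by simp
qed

lemma integral_scaled_eq_powr_mult:
  fixes Q :: "real measure" and \<psi> \<phi> :: "real \<Rightarrow> real" and \<mu> z :: real
  assumes "sets Q = sets borel" and pos: "AE s in Q. s > 0"
    and [measurable]: "\<psi> \<in> borel_measurable borel" "\<phi> \<in> borel_measurable borel"
    and \<psi>: "\<And>x. x > 0 \<Longrightarrow> \<psi> x = x powr \<mu> * \<phi> x" and z: "z > 0"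
  shows "(\<integral>s. \<psi> (z * s) \<partial>Q) = z powr \<mu> * (\<integral>s. s powr \<mu> * \<phi> (z * s) \<partial>Q)"
proof -
  have bmQ: "borel_measurable Q = borel_measurable borel" by (rule measurable_cong_sets[OF assms(1) refl])
  have "(\<integral>s. \<psi> (z * s) \<partial>Q) = (\<integral>s. z powr \<mu> * (s powr \<mu> * \<phi> (z * s)) \<partial>Q)"
  proof (rule integral_cong_AE)
    show "AE s in Q. \<psi> (z * s) = z powr \<mu> * (s powr \<mu> * \<phi> (z * s))"
      using pos by eventually_elim (use z in \<open>simp add: \<psi> powr_mult\<close>)
  qed (auto simp: bmQ)
  then show ?thesis by simp
qed

lemma integral_pos_of_AE_pos:
  fixes Q :: "'b measure" and u :: "'b \<Rightarrow> real"
  assumes "prob_space Q" and u: "integrable Q u" and pos: "AE x in Q. u x > 0"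
  shows "(\<integral>x. u x \<partial>Q) > 0"
proof -
  interpret prob_space Q by fact
  have nonneg: "AE x in Q. 0 \<le> u x" using pos by eventually_elim simp
  have "\<not> (AE x in Q. u x = 0)"
  proof
    assume "AE x in Q. u x = 0"
    with pos have "AE x in Q. False" by eventually_elim simp
    then show False by (simp add: AE_False)
  qed
  then show ?thesis
    using integral_nonneg_eq_0_iff_AE[OF u nonneg] integral_nonneg_AE[OF nonneg] by linarith
qed

lemma mixture_ratio_tendsto:
  fixes Q :: "real measure" and F f h :: "real \<Rightarrow> real" and \<mu> H :: real
  assumes Q: "prob_space Q" "sets Q = sets borel"
    and pos: "AE s in Q. s > 0" and moment: "integrable Q (\<lambda>s. s powr \<mu>)"
    and F_deriv: "\<And>x. x > 0 \<Longrightarrow> (F has_real_derivative f x) (at x)"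
    and f: "\<And>x. x > 0 \<Longrightarrow> f x = x powr (\<mu> - 1) * h x"
    and F_nonpos: "\<And>y. y \<le> 0 \<Longrightarrow> F y = 0"
    and F_cont: "continuous (at_right 0) F"
    and mu: "\<mu> > 0" and h_cont: "isCont h 0" and h0: "h 0 > 0"
    and h_bound: "\<And>x. x \<ge> 0 \<Longrightarrow> 0 \<le> h x \<and> h x \<le> H"
    and [measurable]: "F \<in> borel_measurable borel" "f \<in> borel_measurable borel"
      "h \<in> borel_measurable borel"
  shows "((\<lambda>z. z * (\<integral>s. s * f (z * s) \<partial>Q) / (\<integral>s. F (z * s) \<partial>Q)) \<longlongrightarrow> \<mu>) (at_right 0)"
proof -
  interpret prob_space Q by (rule Q(1))
  define I where "I = (\<integral>s. s powr \<mu> \<partial>Q)"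
  have "AE s in Q. s powr \<mu> > 0" using pos by eventually_elim simp
  then have "I \<noteq> 0" unfolding I_def using integral_pos_of_AE_pos[OF Q(1) moment] by simp
  define K where "K x = F x / x powr \<mu>" for x
  have K_lim: "(K \<longlongrightarrow> h 0 / \<mu>) (at_right 0)"
    unfolding K_def by (rule cdf_div_powr_tendsto(1)[OF F_deriv f F_nonpos F_cont mu h_cont h_bound])
  have K_bound: "\<bar>K x\<bar> \<le> H / \<mu>" if "x > 0" for x
  proof -
    have "0 \<le> K x \<and> K x \<le> H / \<mu>"
      unfolding K_def by (rule cdf_div_powr_tendsto(2)[OF F_deriv f F_nonpos F_cont mu h_cont h_bound that])
    then show ?thesis by simp
  qed
  have h_lim: "(h \<longlongrightarrow> h 0) (at_right 0)"
    using h_cont by (simp add: isCont_def filterlim_at_split)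
  have "((\<lambda>z. \<integral>s. s powr \<mu> * h (z * s) \<partial>Q) \<longlongrightarrow> I * h 0) (at_right 0)"
    unfolding I_def using h_bound
    by (intro scaled_moment_integral_tendsto[OF Q pos moment _ h_lim, of H]) auto
  moreover have "((\<lambda>z. \<integral>s. s powr \<mu> * K (z * s) \<partial>Q) \<longlongrightarrow> I * (h 0 / \<mu>)) (at_right 0)"
    unfolding I_def K_def[abs_def] using K_bound
    by (intro scaled_moment_integral_tendsto[OF Q pos moment _ K_lim[unfolded K_def[abs_def]]]) (auto simp: K_def)
  ultimately have lim: "((\<lambda>z. (\<integral>s. s powr \<mu> * h (z * s) \<partial>Q) / (\<integral>s. s powr \<mu> * K (z * s) \<partial>Q))
      \<longlongrightarrow> (I * h 0) / (I * (h 0 / \<mu>))) (at_right 0)"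
    using \<open>I \<noteq> 0\<close> h0 mu by (intro tendsto_divide) auto
  have "(I * h 0) / (I * (h 0 / \<mu>)) = \<mu>" using \<open>I \<noteq> 0\<close> h0 mu by simp
  note lim = lim[unfolded this]
  have num: "z * (\<integral>s. s * f (z * s) \<partial>Q) = z powr \<mu> * (\<integral>s. s powr \<mu> * h (z * s) \<partial>Q)"
    and den: "(\<integral>s. F (z * s) \<partial>Q) = z powr \<mu> * (\<integral>s. s powr \<mu> * K (z * s) \<partial>Q)" if "z > 0" for z
  proof -
    have "z * (\<integral>s. s * f (z * s) \<partial>Q) = (\<integral>s. (z * s) * f (z * s) \<partial>Q)"
      by (simp add: mult.assoc)
    also have "\<dots> = z powr \<mu> * (\<integral>s. s powr \<mu> * h (z * s) \<partial>Q)"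
      by (rule integral_scaled_eq_powr_mult[OF Q(2) pos _ _ _ that, where \<psi>="\<lambda>x. x * f x"])
         (auto simp: f powr_mult_base)
    finally show "z * (\<integral>s. s * f (z * s) \<partial>Q) = z powr \<mu> * (\<integral>s. s powr \<mu> * h (z * s) \<partial>Q)" .
    show "(\<integral>s. F (z * s) \<partial>Q) = z powr \<mu> * (\<integral>s. s powr \<mu> * K (z * s) \<partial>Q)"
      by (rule integral_scaled_eq_powr_mult[OF Q(2) pos _ _ _ that]) (auto simp: K_def)
  qed
  show ?thesis
    by (rule Lim_transform_eventually[OF lim], rule eventually_mono[OF eventually_at_right_less])
       (simp add: num den)
qed

lemma borel_measurable_measure_le:
  fixes M :: "'a measure" and X :: "'a \<Rightarrow> real"
  assumes "finite_measure M" and [measurable]: "X \<in> borel_measurable M"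
  shows "(\<lambda>x. measure M {\<omega>\<in>space M. X \<omega> \<le> x}) \<in> borel_measurable borel"
  by (rule borel_measurable_mono)
     (auto simp: mono_def intro!: finite_measure.finite_measure_mono[OF assms(1)])

lemma distributed_powr_density_cdf:
  fixes M :: "'a measure" and B :: "'a \<Rightarrow> real" and F f h :: "real \<Rightarrow> real" and \<mu> :: real
  assumes M: "prob_space M" and dB: "distributed M lborel B (\<lambda>x. ennreal (f x))"
    and f: "\<And>x. f x = (if x \<le> 0 then 0 else x powr (\<mu> - 1) * h x)"
    and h_cont: "\<And>x. isCont h x" and h_nonneg: "\<And>x. x \<ge> 0 \<Longrightarrow> 0 \<le> h x"
    and F_def: "\<And>x. F x = measure M {\<omega>\<in>space M. B \<omega> \<le> x}"
  shows "\<And>x. x > 0 \<Longrightarrow> (F has_real_derivative f x) (at x)"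
    and "\<And>y. y \<le> 0 \<Longrightarrow> F y = 0"
    and "continuous (at_right 0) F"
    and "F \<in> borel_measurable borel"
    and "\<And>x. 0 \<le> F x \<and> F x \<le> 1"
proof -
  interpret prob_space M by (rule M)
  have f_nonneg: "0 \<le> f x" for x using h_nonneg[of x] by (cases "x > 0") (auto simp: f)
  have [measurable]: "B \<in> borel_measurable M" using distributed_measurable[OF dB] by simp
  show "(F has_real_derivative f x) (at x)" if x: "x > 0" for x
  proof -
    have "continuous_on {x/2..2*x} (\<lambda>y. y powr (\<mu> - 1) * h y)"
      using x h_cont by (intro continuous_intros continuous_at_imp_continuous_on) auto
    then have "continuous_on {x/2..2*x} f"
      by (rule continuous_on_cong[THEN iffD1, rotated 2]) (use x in \<open>auto simp: f\<close>)
    then show ?thesis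
      unfolding F_def using x by (intro distributed_cdf_has_real_derivative[OF M dB f_nonneg]) auto
  qed
  show "F y = 0" if "y \<le> 0" for y
  proof -
    have "AE \<omega> in M. B \<omega> > 0" by (rule AE_pos_of_distributed[OF dB _ f_nonneg]) (simp add: f)
    then have "AE \<omega> in M. \<not> B \<omega> \<le> y" by eventually_elim (use that in auto)
    then show ?thesis unfolding F_def by (rule prob_eq_0_AE)
  qed
  interpret D: real_distribution "distr M borel B" by simp
  have F_cdf: "F = cdf (distr M borel B)"
    unfolding F_def[abs_def] cdf_def by (auto simp: fun_eq_iff measure_distr vimage_def Int_def conj_commute)
  show "continuous (at_right 0) F" unfolding F_cdf by (rule D.cdf_is_right_cont)
  show "F \<in> borel_measurable borel"
    unfolding F_def[abs_def] by (rule borel_measurable_measure_le) (simp_all add: finite_measure_axioms)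
  show "0 \<le> F x \<and> F x \<le> 1" for x unfolding F_def by simp
qed

lemma emeasure_le_mult_eq_nn_integral:
  fixes M :: "'a measure" and B S :: "'a \<Rightarrow> real" and z :: real
  assumes M: "prob_space M" and indep: "prob_space.indep_var M borel B borel S"
  shows "emeasure M {\<omega>\<in>space M. B \<omega> \<le> z * S \<omega>}
           = (\<integral>\<^sup>+s. ennreal (measure M {\<omega>\<in>space M. B \<omega> \<le> z * s}) \<partial>distr M borel S)"
proof -
  interpret prob_space M by (rule M)
  have [measurable]: "B \<in> borel_measurable M" "S \<in> borel_measurable M"
    using indep_var_rv1[OF indep] indep_var_rv2[OF indep] by auto
  interpret BS: pair_sigma_finite "distr M borel B" "distr M borel S"
    by (intro pair_sigma_finite.intro prob_space_imp_sigma_finite prob_space_distr) simp_all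
  have joint: "distr M borel B \<Otimes>\<^sub>M distr M borel S = distr M (borel \<Otimes>\<^sub>M borel) (\<lambda>\<omega>. (B \<omega>, S \<omega>))"
    using indep unfolding indep_var_distribution_eq by simp
  define A where "A = {p \<in> space (borel \<Otimes>\<^sub>M borel). fst p \<le> z * (snd p :: real)}"
  have A[measurable]: "A \<in> sets (borel \<Otimes>\<^sub>M borel)" unfolding A_def by measurable
  have "{\<omega>\<in>space M. B \<omega> \<le> z * S \<omega>} = (\<lambda>\<omega>. (B \<omega>, S \<omega>)) -` A \<inter> space M"
    by (auto simp: A_def space_pair_measure)
  then have "emeasure M {\<omega>\<in>space M. B \<omega> \<le> z * S \<omega>} = emeasure (distr M borel B \<Otimes>\<^sub>M distr M borel S) A"
    by (simp add: joint emeasure_distr)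
  also have "\<dots> = (\<integral>\<^sup>+s. emeasure (distr M borel B) ((\<lambda>b. (b, s)) -` A) \<partial>distr M borel S)"
    by (rule BS.emeasure_pair_measure_alt2) simp
  also have "\<dots> = (\<integral>\<^sup>+s. ennreal (measure M {\<omega>\<in>space M. B \<omega> \<le> z * s}) \<partial>distr M borel S)"
  proof (rule nn_integral_cong)
    fix s
    have "(\<lambda>b. (b, s)) -` A = {..z * s}" by (auto simp: A_def space_pair_measure)
    moreover have "B -` {..z * s} \<inter> space M = {\<omega>\<in>space M. B \<omega> \<le> z * s}" by auto
    ultimately show "emeasure (distr M borel B) ((\<lambda>b. (b, s)) -` A)
        = ennreal (measure M {\<omega>\<in>space M. B \<omega> \<le> z * s})"
      by (simp add: emeasure_distr emeasure_eq_measure)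
  qed
  finally show ?thesis .
qed

lemma measure_quotient_le_eq_integral:
  fixes M :: "'a measure" and B S :: "'a \<Rightarrow> real" and z :: real
  assumes M: "prob_space M" and indep: "prob_space.indep_var M borel B borel S"
    and S_pos: "AE \<omega> in M. S \<omega> > 0"
  shows "measure M {\<omega>\<in>space M. B \<omega> / S \<omega> \<le> z}
           = (\<integral>s. measure M {\<omega>\<in>space M. B \<omega> \<le> z * s} \<partial>distr M borel S)"
proof -
  interpret prob_space M by (rule M)
  have [measurable]: "B \<in> borel_measurable M" "S \<in> borel_measurable M"
    using indep_var_rv1[OF indep] indep_var_rv2[OF indep] by auto
  interpret Q: prob_space "distr M borel S" by (rule prob_space_distr) simp
  have [measurable]: "(\<lambda>x. measure M {\<omega>\<in>space M. B \<omega> \<le> x}) \<in> borel_measurable borel"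
    by (rule borel_measurable_measure_le) (simp_all add: finite_measure_axioms)
  have "integrable (distr M borel S) (\<lambda>s. measure M {\<omega>\<in>space M. B \<omega> \<le> z * s})"
  proof (rule Bochner_Integration.integrable_bound[of _ "\<lambda>_. 1::real"])
    show "(\<lambda>s. measure M {\<omega>\<in>space M. B \<omega> \<le> z * s}) \<in> borel_measurable (distr M borel S)"
      by measurable
  qed auto
  then have "emeasure M {\<omega>\<in>space M. B \<omega> \<le> z * S \<omega>}
      = ennreal (\<integral>s. measure M {\<omega>\<in>space M. B \<omega> \<le> z * s} \<partial>distr M borel S)"
    unfolding emeasure_le_mult_eq_nn_integral[OF M indep]
    by (intro nn_integral_eq_integral AE_I2) simp_all
  moreover have "measure M {\<omega>\<in>space M. B \<omega> / S \<omega> \<le> z} = measure M {\<omega>\<in>space M. B \<omega> \<le> z * S \<omega>}"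
  proof (rule finite_measure_eq_AE)
    show "AE \<omega> in M. (\<omega> \<in> {\<omega>\<in>space M. B \<omega> / S \<omega> \<le> z}) = (\<omega> \<in> {\<omega>\<in>space M. B \<omega> \<le> z * S \<omega>})"
      using S_pos by eventually_elim (auto simp: divide_le_eq mult.commute)
  qed measurable
  moreover have "0 \<le> (\<integral>s. measure M {\<omega>\<in>space M. B \<omega> \<le> z * s} \<partial>distr M borel S)"
    by (intro integral_nonneg_AE AE_I2) simp
  ultimately show ?thesis by (simp add: emeasure_eq_measure)
qed

lemma quotient_cdf_ratio_tendsto:
  fixes M :: "'a measure" and B S :: "'a \<Rightarrow> real" and f h g :: "real \<Rightarrow> real" and \<mu> H :: real
  assumes M: "prob_space M" and dB: "distributed M lborel B (\<lambda>x. ennreal (f x))"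
    and f: "\<And>x. f x = (if x \<le> 0 then 0 else x powr (\<mu> - 1) * h x)"
    and h_cont: "\<And>x. isCont h x" and h0: "h 0 > 0"
    and h_bound: "\<And>x. x \<ge> 0 \<Longrightarrow> 0 \<le> h x \<and> h x \<le> H" and mu: "\<mu> > 0"
    and indep: "prob_space.indep_var M borel B borel S"
    and S_pos: "AE \<omega> in M. S \<omega> > 0" and S_moment: "integrable M (\<lambda>\<omega>. S \<omega> powr \<mu>)"
    and dG: "distributed M lborel (\<lambda>\<omega>. B \<omega> / S \<omega>) (\<lambda>z. ennreal (g z))"
    and g_nonneg: "\<And>z. 0 \<le> g z" and g_cont: "continuous_on {0<..} g"
  shows "((\<lambda>z. z * g z / measure M {\<omega> \<in> space M. B \<omega> / S \<omega> \<le> z}) \<longlongrightarrow> \<mu>) (at_right 0)"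
proof -
  interpret prob_space M by (rule M)
  define F where "F x = measure M {\<omega>\<in>space M. B \<omega> \<le> x}" for x
  define Q where "Q = distr M borel S"
  have h_nonneg: "0 \<le> h x" if "x \<ge> 0" for x using h_bound[OF that] by simp
  note F = distributed_powr_density_cdf[OF M dB f h_cont h_nonneg F_def]
  have f_pos: "f x = x powr (\<mu> - 1) * h x" if "x > 0" for x using that by (simp add: f)
  have [measurable]: "S \<in> borel_measurable M" using indep_var_rv2[OF indep] by simp
  have Q: "prob_space Q" "sets Q = sets borel" unfolding Q_def by (auto intro: prob_space_distr)
  have Q_pos: "AE s in Q. s > 0" unfolding Q_def using S_pos by (subst AE_distr_iff) auto
  have Q_moment: "integrable Q (\<lambda>s. s powr \<mu>)"
    unfolding Q_def using S_moment by (subst integrable_distr_eq) auto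
  have "0 \<le> f x" for x using h_bound[of x] by (cases "x > 0") (auto simp: f)
  then have f_meas: "f \<in> borel_measurable borel" using distributed_real_measurable[OF _ dB] by simp
  have h_meas: "h \<in> borel_measurable borel"
    using h_cont by (intro borel_measurable_continuous_onI continuous_at_imp_continuous_on) auto
  have mixture: "measure M {\<omega>\<in>space M. B \<omega> / S \<omega> \<le> z} = (\<integral>s. F (z * s) \<partial>Q)" for z
    unfolding F_def Q_def by (rule measure_quotient_le_eq_integral[OF M indep S_pos])
  \<comment> \<open>Both sides are derivatives of the CDF of \<open>B / S\<close>.\<close>
  have g_eq: "g z = (\<integral>s. s * f (z * s) \<partial>Q)" if z: "z > 0" for z
  proof (rule DERIV_unique)
    show "((\<lambda>z. \<integral>s. F (z * s) \<partial>Q) has_real_derivative g z) (at z)"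
      unfolding mixture[symmetric] using z g_cont
      by (intro distributed_cdf_has_real_derivative[OF M dG g_nonneg, of "z / 2" z "2 * z"])
         (auto elim!: continuous_on_subset)
    show "((\<lambda>z. \<integral>s. F (z * s) \<partial>Q) has_real_derivative (\<integral>s. s * f (z * s) \<partial>Q)) (at z)"
      by (rule mixture_cdf_has_real_derivative[OF Q Q_pos Q_moment F(1) f_pos h_bound F(4) f_meas F(5) z])
  qed
  have "((\<lambda>z. z * (\<integral>s. s * f (z * s) \<partial>Q) / (\<integral>s. F (z * s) \<partial>Q)) \<longlongrightarrow> \<mu>) (at_right 0)"
    by (rule mixture_ratio_tendsto[OF Q Q_pos Q_moment F(1) f_pos F(2,3) mu h_cont h0 h_bound F(4) f_meas h_meas])
  then show ?thesis
    by (rule Lim_transform_eventually, intro eventually_mono[OF eventually_at_right_less])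
       (simp add: mixture g_eq)
qed

lemma kms_sum_pos_moment:
  fixes M :: "'a measure" and X :: "nat \<Rightarrow> 'a \<Rightarrow> real" and J :: "nat set"
    and \<kappa> \<mu> m xb :: "nat \<Rightarrow> real" and p :: real
  assumes M: "prob_space M" and J: "finite J" "J \<noteq> {}" and p: "p > 0"
    and params: "\<And>j. j \<in> J \<Longrightarrow> \<kappa> j \<ge> 0 \<and> \<mu> j > 0 \<and> m j > 0 \<and> xb j > 0"
    and d: "\<And>j. j \<in> J \<Longrightarrow> distributed M lborel (X j) (\<lambda>x. ennreal (kms_pdf (\<kappa> j) (\<mu> j) (m j) (xb j) x))"
  shows "AE \<omega> in M. (\<Sum>j\<in>J. X j \<omega>) > 0" and "integrable M (\<lambda>\<omega>. (\<Sum>j\<in>J. X j \<omega>) powr p)"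
proof -
  have X_pos: "AE \<omega> in M. X j \<omega> > 0" and X_moment: "integrable M (\<lambda>\<omega>. X j \<omega> powr p)" if "j \<in> J" for j
    using kms_distributed_pos_moments[OF M _ _ _ _ d[OF that]] params[OF that] p by auto
  have "AE \<omega> in M. \<forall>j\<in>J. X j \<omega> > 0" using X_pos J by (subst AE_finite_all) auto
  then show "AE \<omega> in M. (\<Sum>j\<in>J. X j \<omega>) > 0" by eventually_elim (use J in \<open>auto intro: sum_pos\<close>)
  have "X j \<in> borel_measurable M" if "j \<in> J" for j
    using distributed_measurable[OF d[OF that]] by simp
  then show "integrable M (\<lambda>\<omega>. (\<Sum>j\<in>J. X j \<omega>) powr p)"
    by (rule integrable_sum_powr[OF M J p _ X_pos X_moment])
qed

lemma (in prob_space) indep_var_head_sum: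
  fixes B :: "'a \<Rightarrow> real" and C :: "nat \<Rightarrow> 'a \<Rightarrow> real"
  assumes "indep_vars (\<lambda>_. borel) (\<lambda>i. if i = 0 then B else C i) {0..N}"
  shows "indep_var borel B borel (\<lambda>\<omega>. \<Sum>j=1..N. C j \<omega>)"
proof -
  have "{0..N} = insert 0 {1..N}" by auto
  with assms have "indep_vars (\<lambda>_. borel) (\<lambda>i. if i = 0 then B else C i) (insert 0 {1..N})"
    by simp
  from indep_vars_sum[OF _ _ this]
  have "indep_var borel B borel (\<lambda>\<omega>. \<Sum>j=1..N. (if j = 0 then B else C j) \<omega>)" by simp
  moreover have "(\<lambda>\<omega>. \<Sum>j=1..N. (if j = 0 then B else C j) \<omega>) = (\<lambda>\<omega>. \<Sum>j=1..N. C j \<omega>)"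
    by (intro ext sum.cong) auto
  ultimately show ?thesis by simp
qed

theorem mainTheorem2:
  fixes M :: "'a measure"
    and N :: nat
    and B :: "'a \<Rightarrow> real" and C :: "nat \<Rightarrow> 'a \<Rightarrow> real"
    and \<kappa> \<mu> m xb :: real
    and \<kappa>j \<mu>j mj xbj :: "nat \<Rightarrow> real"
    and g :: "real \<Rightarrow> real"
  assumes "prob_space M"
    and "N \<ge> 1"
    and "\<kappa> \<ge> 0" "\<mu> > 0" "m > 0" "xb > 0"
    and "\<And>j. j \<in> {1..N} \<Longrightarrow> \<kappa>j j \<ge> 0 \<and> \<mu>j j > 0 \<and> mj j > 0 \<and> xbj j > 0"
    and "distributed M lborel B (\<lambda>x. ennreal (kms_pdf \<kappa> \<mu> m xb x))"
    and "\<And>j. j \<in> {1..N} \<Longrightarrow>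
           distributed M lborel (C j) (\<lambda>x. ennreal (kms_pdf (\<kappa>j j) (\<mu>j j) (mj j) (xbj j) x))"
    and "prob_space.indep_vars M (\<lambda>_. borel) (\<lambda>i. if i = 0 then B else C i) {0..N}"
    and "distributed M lborel (\<lambda>\<omega>. B \<omega> / (\<Sum>j=1..N. C j \<omega>)) (\<lambda>z. ennreal (g z))"
    and "\<And>z. 0 \<le> g z"
    and "continuous_on {0<..} g"
  shows "((\<lambda>z. z * g z / measure M {\<omega> \<in> space M. B \<omega> / (\<Sum>j=1..N. C j \<omega>) \<le> z})
           \<longlongrightarrow> \<mu>) (at_right 0)"
proof -
  interpret prob_space M by fact
  obtain h K \<delta> where f: "\<And>x. kms_pdf \<kappa> \<mu> m xb x = (if x \<le> 0 then 0 else x powr (\<mu> - 1) * h x)"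
    and h: "\<And>x. isCont h x" "h 0 > 0" "\<And>x. x \<ge> 0 \<Longrightarrow> 0 \<le> h x \<and> h x \<le> K * exp (- \<delta> * x)"
    and \<delta>: "\<delta> > 0"
    using kms_pdf_factorization[OF assms(3-6)] by metis
  have h_bound: "0 \<le> h x \<and> h x \<le> K" if "x \<ge> 0" for x
    using h(3)[OF that] h(3)[of 0] that \<delta> mult_left_le[of "exp (- \<delta> * x)" K] by auto
  have indep: "indep_var borel B borel (\<lambda>\<omega>. \<Sum>j=1..N. C j \<omega>)"
    by (rule indep_var_head_sum[OF assms(10)])
  note S = kms_sum_pos_moment[OF assms(1) _ _ assms(4) assms(7,9)]
  show ?thesis
    using assms(2) h_bound
    by (intro quotient_cdf_ratio_tendsto[OF assms(1,8) f h(1,2) _ assms(4) indep _ _ assms(11-13)] S)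
       auto
qed

end
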